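(* Let $X$ be a batch of $S(H)$ and $(v,w)$ an edge of $H$ with $e(v,w)$ occurring in $X$; let $(v,y)$ be the edge that cyclicly precedes $(v,w)$. If $e(v,w)$ is immediately preceded in $X$ by $e(v,y)$, then the segment of $X$ occupied by $e(v,w)$ is exactly one phrase of the LZ77 parsing of $X$; if $e(v,w)$ is immediately preceded by $s(v)$, it is the union of exactly two phrases; in every other case (including when $e(v,w)$ is the first string of $X$), it is the union of at least two phrases.
   Context: $H$ is a directed graph without loops in which no vertex has outdegree exactly 1. For each vertex $v$ introduce three symbols $v$, $v'$, $\$_v$; all these symbols are pairwise distinct (over all vertices). For a vertex $v$ with outdegree $d=d(v)\ge 1$, let $w_0,\dots,w_{d-1}$ be its out-neighbors in a fixed cyclic order (indices mod $d$); the edge $(v,w_{i-1})$ cyclicly precedes $(v,w_i)$. Define $e(v,w_i)=(v'w_{i-1})^4v'w_i$ for $0\le i<d$ and $s(v)=v^4(v')^5\$_v$. $S(H)$ is the set of all strings $s(v)$ ($v$ a vertex) and $e(v,w)$ ($(v,w)$ an edge). A batch is a sequence of distinct elements of $S(H)$, identified with their concatenation; a schedule is a partition of $S(H)$ into batches. LZ77 parsing of a string $z$: $z=z_1z_2\cdots z_t$ where, once $z_1,\dots,z_{i-1}$ are determined and the remaining suffix is nonempty, $z_i$ is the longest nonempty prefix $u$ of the remaining suffix such that $u^-$ ($u$ with its last symbol deleted) has an occurrence in $z$ starting at a position strictly smaller than the starting position of $u$ (the empty string always qualifies). The $z_i$ are the phrases; $|\mathcal C(z)|=t$ is the number of phrases.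 *)

theory Defs
  imports Main
begin

text \<open>Symbols: for each vertex v the three pairwise distinct symbols v, v' and $_v.\<close>
datatype 'v sym = Sym 'v | Prime 'v | Dollar 'v

definition out_nbrs :: "('v \<times> 'v) set \<Rightarrow> 'v \<Rightarrow> 'v set" where
  "out_nbrs E v = {w. (v, w) \<in> E}"

definition valid_graph :: "'v set \<Rightarrow> ('v \<times> 'v) set \<Rightarrow> ('v \<Rightarrow> 'v list) \<Rightarrow> bool" where
  "valid_graph V E cord \<longleftrightarrow>
     finite V \<and> E \<subseteq> V \<times> V \<and> (\<forall>v. (v, v) \<notin> E) \<and>
     (\<forall>v\<in>V. card (out_nbrs E v) \<noteq> 1) \<and>
     (\<forall>v\<in>V. distinct (cord v) \<and> set (cord v) = out_nbrs E v)"

definition cpred :: "('v \<Rightarrow> 'v list) \<Rightarrow> 'v \<Rightarrow> 'v \<Rightarrow> 'v" where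
  "cpred cord v w = (let L = cord v; d = length L; i = (THE i. i < d \<and> L ! i = w) in L ! ((i + d - 1) mod d))"

definition estr :: "('v \<Rightarrow> 'v list) \<Rightarrow> 'v \<Rightarrow> 'v \<Rightarrow> 'v sym list" where
  "estr cord v w = concat (replicate 4 [Prime v, Sym (cpred cord v w)]) @ [Prime v, Sym w]"

definition sstr :: "'v \<Rightarrow> 'v sym list" where
  "sstr v = replicate 4 (Sym v) @ replicate 5 (Prime v) @ [Dollar v]"

definition SH :: "'v set \<Rightarrow> ('v \<times> 'v) set \<Rightarrow> ('v \<Rightarrow> 'v list) \<Rightarrow> 'v sym list set" where
  "SH V E cord = sstr ` V \<union> (\<lambda>(v, w). estr cord v w) ` E"

definition is_batch :: "'v set \<Rightarrow> ('v \<times> 'v) set \<Rightarrow> ('v \<Rightarrow> 'v list) \<Rightarrow> 'v sym list list \<Rightarrow> bool" where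
  "is_batch V E cord xs \<longleftrightarrow> distinct xs \<and> set xs \<subseteq> SH V E cord"

definition prev_occ :: "'a list \<Rightarrow> nat \<Rightarrow> nat \<Rightarrow> bool" where
  "prev_occ z i m \<longleftrightarrow> m = 0 \<or>
     (\<exists>j<i. j + m \<le> length z \<and> take m (drop j z) = take m (drop i z))"

definition lz_len :: "'a list \<Rightarrow> nat \<Rightarrow> nat" where
  "lz_len z i = (GREATEST l. 1 \<le> l \<and> i + l \<le> length z \<and> prev_occ z i (l - 1))"

inductive lz_boundary :: "'a list \<Rightarrow> nat \<Rightarrow> bool" for z where
  start: "lz_boundary z 0"
| step: "lz_boundary z i \<Longrightarrow> i < length z \<Longrightarrow> lz_boundary z (i + lz_len z i)"

definition union_of_phrases :: "'a list \<Rightarrow> nat \<Rightarrow> nat \<Rightarrow> nat \<Rightarrow> bool" where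
  "union_of_phrases z a b n \<longleftrightarrow> lz_boundary z a \<and> lz_boundary z b \<and>
     card {i. lz_boundary z i \<and> a \<le> i \<and> i < b} = n"

end

theory Submission
  imports Defs
begin

(* All strings of S(H) have length 10, so X is a sequence of blocks and a = 10 k.  Let y be the
   cyclic predecessor of w.  Inside X the pattern y v' y occurs only around the even offsets of
   the block e(v,w) itself, since y determines w and differs from w (v has outdegree at least 2).
   Consequently no factor running from the middle of e(v,w) up to its last symbol w occurs
   earlier, and any earlier occurrence of a factor covering offsets 1..3 of e(v,w) starts exactly
   two positions before it.  Together with the freshness of $_u at the end of s(u), this makes
   every block end a phrase boundary, and the first phrase of e(v,w), being copied from two
   positions earlier, is governed by the two symbols preceding the block: after v' y (the end of
   e(v,y)) it covers the whole block; after v' $_v (the end of s(v)) it has length 2 to 4 and the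
   2-periodic rest of the block is one more phrase; otherwise it has length at most 9. *)

lemma prev_occ_nth_iff:
  "prev_occ z i m \<longleftrightarrow> m = 0 \<or>
     (\<exists>j<i. i + m \<le> length z \<and> (\<forall>r<m. z ! (j + r) = z ! (i + r)))"
proof
  assume "prev_occ z i m"
  show "m = 0 \<or> (\<exists>j<i. i + m \<le> length z \<and> (\<forall>r<m. z ! (j + r) = z ! (i + r)))"
  proof (cases "m = 0")
    case False
    then obtain j where j: "j < i" "j + m \<le> length z" and eq: "take m (drop j z) = take m (drop i z)"
      using \<open>prev_occ z i m\<close> unfolding prev_occ_def by auto
    have "length (take m (drop j z)) = m" using j(2) by simp
    then have "length (take m (drop i z)) = m" using eq by simp
    then have "m \<le> length z - i" by (simp add: min_def split: if_splits)
    then have "i + m \<le> length z" using False by arith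
    moreover have "z ! (j + r) = z ! (i + r)" if "r < m" for r
      using arg_cong[OF eq, of "\<lambda>xs. xs ! r"] that j \<open>i + m \<le> length z\<close> by simp
    ultimately show ?thesis using j by blast
  qed simp
next
  assume "m = 0 \<or> (\<exists>j<i. i + m \<le> length z \<and> (\<forall>r<m. z ! (j + r) = z ! (i + r)))"
  then show "prev_occ z i m"
  proof
    assume "\<exists>j<i. i + m \<le> length z \<and> (\<forall>r<m. z ! (j + r) = z ! (i + r))"
    then obtain j where "j < i" "i + m \<le> length z" "\<forall>r<m. z ! (j + r) = z ! (i + r)" by blast
    moreover have "take m (drop j z) = take m (drop i z)"
      by (rule nth_equalityI) (use calculation in auto)
    ultimately show ?thesis unfolding prev_occ_def by auto
  qed (simp add: prev_occ_def)
qed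

lemma prev_occ_downward: "prev_occ z i m \<Longrightarrow> m' \<le> m \<Longrightarrow> prev_occ z i m'"
  unfolding prev_occ_nth_iff by fastforce

lemma lz_len_bounds:
  assumes "i < length z"
  shows "1 \<le> lz_len z i" "i + lz_len z i \<le> length z" "prev_occ z i (lz_len z i - 1)"
proof -
  let ?P = "\<lambda>l. 1 \<le> l \<and> i + l \<le> length z \<and> prev_occ z i (l - 1)"
  have "?P 1" using assms unfolding prev_occ_def by auto
  then have "?P (Greatest ?P)" by (rule GreatestI_nat[where b = "length z"]) auto
  then show "1 \<le> lz_len z i" "i + lz_len z i \<le> length z" "prev_occ z i (lz_len z i - 1)"
    unfolding lz_len_def by auto
qed

lemma le_lz_lenI: "prev_occ z i (l - 1) \<Longrightarrow> i + l \<le> length z \<Longrightarrow> 1 \<le> l \<Longrightarrow> l \<le> lz_len z i"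
  unfolding lz_len_def by (rule Greatest_le_nat[where b = "length z"]) auto

lemma lz_len_leI:
  assumes "\<not> prev_occ z i l" "i < length z"
  shows "lz_len z i \<le> l"
proof (rule ccontr)
  assume "\<not> lz_len z i \<le> l"
  then have "l \<le> lz_len z i - 1" by simp
  then have "prev_occ z i l" using prev_occ_downward[OF lz_len_bounds(3)[OF assms(2)]] by blast
  with assms(1) show False by contradiction
qed

fun lz_pos :: "'a list \<Rightarrow> nat \<Rightarrow> nat" where
  "lz_pos z 0 = 0"
| "lz_pos z (Suc m) = (if lz_pos z m < length z then lz_pos z m + lz_len z (lz_pos z m) else lz_pos z m)"

lemma lz_boundary_iff_lz_pos: "lz_boundary z i \<longleftrightarrow> (\<exists>m. i = lz_pos z m)"
proof
  show "lz_boundary z i \<Longrightarrow> \<exists>m. i = lz_pos z m"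
  proof (induction rule: lz_boundary.induct)
    case start
    show ?case by (metis lz_pos.simps(1))
  next
    case (step i)
    then show ?case by (metis lz_pos.simps(2))
  qed
  show "\<exists>m. i = lz_pos z m \<Longrightarrow> lz_boundary z i"
  proof (elim exE)
    fix m show "i = lz_pos z m \<Longrightarrow> lz_boundary z i"
      by (induction m arbitrary: i) (auto intro: lz_boundary.intros)
  qed
qed

lemma mono_lz_pos: "mono (lz_pos z)"
  by (rule mono_iff_le_Suc[THEN iffD2]) simp

lemma lz_pos_ge: "min m (length z) \<le> lz_pos z m"
proof (induction m)
  case (Suc m)
  then show ?case using lz_len_bounds(1)[of "lz_pos z m" z] by auto
qed simp

lemma lz_boundary_le_length: "lz_boundary z i \<Longrightarrow> i \<le> length z"
  by (induction rule: lz_boundary.induct) (auto dest: lz_len_bounds(2))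

lemma lz_boundary_gap:
  assumes "lz_boundary z p" "p < length z" "lz_boundary z i" "p < i"
  shows "p + lz_len z p \<le> i"
proof -
  obtain m m' where m: "p = lz_pos z m" and m': "i = lz_pos z m'"
    using assms(1,3) unfolding lz_boundary_iff_lz_pos by blast
  have "Suc m \<le> m'" using monoD[OF mono_lz_pos, of m' m] m m' assms(4) by (metis not_less_eq_eq leD)
  then have "lz_pos z (Suc m) \<le> i" using monoD[OF mono_lz_pos] m' by blast
  then show ?thesis using m assms(2) by simp
qed

lemma lz_phrase_cover:
  assumes "r < length z"
  obtains p where "lz_boundary z p" "p \<le> r" "r < p + lz_len z p"
proof -
  have ex: "\<exists>m. r < lz_pos z m" using lz_pos_ge[of "Suc r" z] assms by (intro exI[of _ "Suc r"]) auto
  define m where "m = (LEAST m. r < lz_pos z m)"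
  have r_less: "r < lz_pos z m" unfolding m_def by (rule LeastI_ex[OF ex])
  then obtain m' where m': "m = Suc m'" by (cases m) auto
  have le: "lz_pos z m' \<le> r" using not_less_Least[of m' "\<lambda>m. r < lz_pos z m"] m' unfolding m_def by auto
  then have "lz_pos z m = lz_pos z m' + lz_len z (lz_pos z m')" using m' assms by simp
  then show thesis using that[of "lz_pos z m'"] le r_less lz_boundary_iff_lz_pos by metis
qed

lemma lz_boundaryI_phrase_end:
  assumes "r < length z"
    and "\<And>p. lz_boundary z p \<Longrightarrow> p \<le> r \<Longrightarrow> r < p + lz_len z p \<Longrightarrow> p + lz_len z p = b"
  shows "lz_boundary z b"
proof -
  obtain p where p: "lz_boundary z p" "p \<le> r" "r < p + lz_len z p"
    using lz_phrase_cover[OF assms(1)] .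
  then have "lz_boundary z (p + lz_len z p)" using assms(1) by (intro lz_boundary.step) auto
  then show ?thesis using assms(2)[OF p] by simp
qed

lemma lz_boundary_Suc_fresh:
  assumes "r < length z" "z ! r \<notin> set (take r z)"
  shows "lz_boundary z (Suc r)"
proof (rule lz_boundaryI_phrase_end[OF assms(1)])
  fix p assume p: "lz_boundary z p" "p \<le> r" "r < p + lz_len z p"
  have "\<not> r - p < lz_len z p - 1"
  proof
    assume "r - p < lz_len z p - 1"
    moreover obtain j where "j < p" "\<forall>s<lz_len z p - 1. z ! (j + s) = z ! (p + s)"
      using lz_len_bounds(3)[of p z] p assms(1) calculation unfolding prev_occ_nth_iff by auto
    ultimately have "z ! (j + (r - p)) = z ! r" "j + (r - p) < r" using p(2) by auto
    then show False using assms by (metis in_set_conv_nth length_take min.absorb4 nth_take)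
  qed
  then show "p + lz_len z p = Suc r" using p by linarith
qed

lemma union_of_phrases_single:
  assumes "lz_boundary z a" "a < length z"
  shows "union_of_phrases z a (a + lz_len z a) 1"
proof -
  have "{i. lz_boundary z i \<and> a \<le> i \<and> i < a + lz_len z a} = {a}"
  proof (intro equalityI subsetI)
    fix i assume "i \<in> {i. lz_boundary z i \<and> a \<le> i \<and> i < a + lz_len z a}"
    then show "i \<in> {a}" using lz_boundary_gap[OF assms, of i] by (cases "a < i") auto
  qed (use assms lz_len_bounds(1)[OF assms(2)] in auto)
  moreover have "lz_boundary z (a + lz_len z a)" using assms by (rule lz_boundary.step)
  ultimately show ?thesis unfolding union_of_phrases_def using assms(1) by simp
qed

lemma union_of_phrases_two:
  assumes "lz_boundary z a" "a < length z" and p: "p = a + lz_len z a" "p < length z"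
  shows "union_of_phrases z a (p + lz_len z p) 2"
proof -
  have bp: "lz_boundary z p" using assms lz_boundary.step by blast
  have ap: "a < p" using lz_len_bounds(1)[OF assms(2)] p by simp
  have "{i. lz_boundary z i \<and> a \<le> i \<and> i < p + lz_len z p} = {a, p}"
  proof (intro equalityI subsetI)
    fix i assume i: "i \<in> {i. lz_boundary z i \<and> a \<le> i \<and> i < p + lz_len z p}"
    then have "\<not> p < i" using lz_boundary_gap[OF bp p(2), of i] by auto
    moreover have "\<not> a < i \<or> p \<le> i" using lz_boundary_gap[OF assms(1,2), of i] i p(1) by auto
    ultimately show "i \<in> {a, p}" using i by auto
  qed (use assms bp ap lz_len_bounds(1)[OF p(2)] in auto)
  moreover have "lz_boundary z (p + lz_len z p)" using bp p(2) by (rule lz_boundary.step)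
  moreover have "card {a, p} = 2" using ap by simp
  ultimately show ?thesis unfolding union_of_phrases_def using assms(1) by simp
qed

lemma union_of_phrases_ge2:
  assumes "lz_boundary z a" "lz_boundary z b" "a + lz_len z a < b"
  shows "\<exists>n\<ge>2. union_of_phrases z a b n"
proof -
  let ?S = "{i. lz_boundary z i \<and> a \<le> i \<and> i < b}"
  have "a < length z" using assms lz_boundary_le_length[OF assms(2)] by linarith
  then have "{a, a + lz_len z a} \<subseteq> ?S" "card {a, a + lz_len z a} = 2"
    using assms lz_len_bounds(1)[of a z] lz_boundary.step[of z a] by auto
  moreover have "finite ?S" by (rule finite_subset[of _ "{a..<b}"]) auto
  ultimately have "2 \<le> card ?S" by (metis card_mono)
  then show ?thesis unfolding union_of_phrases_def using assms(1,2) by blast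
qed

lemma length_concat_uniform: "\<forall>x\<in>set xs. length x = n \<Longrightarrow> length (concat xs) = n * length xs"
  by (induction xs) auto

lemma nth_concat_uniform:
  "\<forall>x\<in>set xs. length x = n \<Longrightarrow> i < length xs \<Longrightarrow> q < n \<Longrightarrow>
    concat xs ! (n * i + q) = xs ! i ! q"
proof (induction xs arbitrary: i)
  case (Cons x xs)
  then show ?case by (cases i) (auto simp: nth_append)
qed simp

lemma length_sstr [simp]: "length (sstr u) = 10"
  unfolding sstr_def by simp

lemma length_estr [simp]: "length (estr cord u w) = 10"
  unfolding estr_def by (simp add: numeral_eq_Suc)

lemma sstr_nth: "q < 10 \<Longrightarrow> sstr u ! q = (if q < 4 then Sym u else if q < 9 then Prime u else Dollar u)"
  unfolding sstr_def by (auto simp: nth_append)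

lemma estr_nth:
  assumes "q < 10"
  shows "estr cord u w ! q = (if even q then Prime u else if q = 9 then Sym w else Sym (cpred cord u w))"
proof -
  have "estr cord u w = [Prime u, Sym (cpred cord u w), Prime u, Sym (cpred cord u w),
    Prime u, Sym (cpred cord u w), Prime u, Sym (cpred cord u w), Prime u, Sym w]"
    unfolding estr_def by (simp add: numeral_eq_Suc)
  moreover have "q = 0 \<or> q = 1 \<or> q = 2 \<or> q = 3 \<or> q = 4 \<or> q = 5 \<or> q = 6 \<or> q = 7 \<or> q = 8 \<or> q = 9"
    using assms by arith
  ultimately show ?thesis by auto
qed

definition cyclic_pred_index :: "nat \<Rightarrow> nat \<Rightarrow> nat" where
  "cyclic_pred_index d i = (if i = 0 then d - 1 else i - 1)"

lemma cyclic_pred_index_less: "i < d \<Longrightarrow> cyclic_pred_index d i < d"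
  unfolding cyclic_pred_index_def by auto

lemma cyclic_pred_index_neq: "2 \<le> d \<Longrightarrow> cyclic_pred_index d i \<noteq> i"
  unfolding cyclic_pred_index_def by auto

lemma cyclic_pred_index_inj:
  "i < d \<Longrightarrow> i' < d \<Longrightarrow> cyclic_pred_index d i = cyclic_pred_index d i' \<Longrightarrow> i = i'"
  unfolding cyclic_pred_index_def by (auto split: if_splits)

lemma cpred_nth:
  assumes "distinct (cord u)" "i < length (cord u)"
  shows "cpred cord u (cord u ! i) = cord u ! cyclic_pred_index (length (cord u)) i"
proof -
  let ?d = "length (cord u)"
  have "(THE i'. i' < ?d \<and> cord u ! i' = cord u ! i) = i"
    using assms nth_eq_iff_index_eq by (intro the_equality) auto
  moreover have "(i + ?d - 1) mod ?d = cyclic_pred_index ?d i"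
  proof (cases "i = 0")
    case False
    then show ?thesis using assms(2) by (simp add: cyclic_pred_index_def le_mod_geq)
  qed (use assms(2) in \<open>simp add: cyclic_pred_index_def\<close>)
  ultimately show ?thesis unfolding cpred_def Let_def by simp
qed

locale cyclic_digraph =
  fixes V :: "'v set" and E :: "('v \<times> 'v) set" and cord :: "'v \<Rightarrow> 'v list"
  assumes valid: "valid_graph V E cord"
begin

lemma cord_edge:
  assumes "(u, w) \<in> E"
  shows "distinct (cord u)" "2 \<le> length (cord u)" "w \<in> set (cord u)"
proof -
  have u: "u \<in> V" using valid assms unfolding valid_graph_def by auto
  have s: "set (cord u) = out_nbrs E u" using valid u unfolding valid_graph_def by auto
  show d: "distinct (cord u)" using valid u unfolding valid_graph_def by auto
  show w: "w \<in> set (cord u)" using s assms unfolding out_nbrs_def by auto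
  have "card (out_nbrs E u) \<noteq> 1" using valid u unfolding valid_graph_def by auto
  then have "length (cord u) \<noteq> 1" using s d distinct_card by metis
  moreover have "0 < length (cord u)" using w by (auto simp: length_pos_if_in_set)
  ultimately show "2 \<le> length (cord u)" by linarith
qed

lemma obtain_cord_index:
  assumes "(u, w) \<in> E"
  obtains i where "i < length (cord u)" "w = cord u ! i"
    "cpred cord u w = cord u ! cyclic_pred_index (length (cord u)) i"
  using cord_edge[OF assms] cpred_nth by (metis in_set_conv_nth)

lemma cpred_neq:
  assumes "(u, w) \<in> E"
  shows "cpred cord u w \<noteq> w"
proof (rule obtain_cord_index[OF assms])
  fix i assume "i < length (cord u)" "w = cord u ! i"
    "cpred cord u w = cord u ! cyclic_pred_index (length (cord u)) i"
  then show ?thesis using cord_edge[OF assms] cyclic_pred_index_less cyclic_pred_index_neq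
    by (simp add: nth_eq_iff_index_eq)
qed

lemma cpred_inj:
  assumes "(u, w) \<in> E" "(u, w') \<in> E" "cpred cord u w = cpred cord u w'"
  shows "w = w'"
proof -
  obtain i where i: "i < length (cord u)" "w = cord u ! i"
    "cpred cord u w = cord u ! cyclic_pred_index (length (cord u)) i"
    using obtain_cord_index[OF assms(1)] .
  obtain i' where i': "i' < length (cord u)" "w' = cord u ! i'"
    "cpred cord u w' = cord u ! cyclic_pred_index (length (cord u)) i'"
    using obtain_cord_index[OF assms(2)] .
  have "cyclic_pred_index (length (cord u)) i = cyclic_pred_index (length (cord u)) i'"
    using assms(3) i i' cord_edge(1)[OF assms(1)] cyclic_pred_index_less by (simp add: nth_eq_iff_index_eq)
  then show ?thesis using i i' cyclic_pred_index_inj by metis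
qed

end

locale batch = cyclic_digraph +
  fixes xs :: "'v sym list list"
  assumes batch: "is_batch V E cord xs"
begin

abbreviation X :: "'v sym list" where
  "X \<equiv> concat xs"

lemma batch_elem_cases:
  assumes "x \<in> set xs"
  obtains u where "x = sstr u" | u w where "(u, w) \<in> E" "x = estr cord u w"
  using assms batch unfolding is_batch_def SH_def by auto

lemma length_batch_elem: "x \<in> set xs \<Longrightarrow> length x = 10"
  by (erule batch_elem_cases) auto

lemma length_X: "length X = 10 * length xs"
  using length_concat_uniform length_batch_elem by blast

lemma nth_X: "i < length xs \<Longrightarrow> q < 10 \<Longrightarrow> X ! (10 * i + q) = xs ! i ! q"
  using nth_concat_uniform length_batch_elem by blast

lemma obtain_block_position:
  assumes "t < length X"
  obtains i q where "i < length xs" "q < 10" "t = 10 * i + q"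
  using assms length_X by (intro that[of "t div 10" "t mod 10"]) auto

lemma batch_nth_inj: "i < length xs \<Longrightarrow> j < length xs \<Longrightarrow> xs ! i = xs ! j \<Longrightarrow> i = j"
  using batch nth_eq_iff_index_eq unfolding is_batch_def by blast

lemma batch_elem_eq_estr:
  assumes "x \<in> set xs" "x ! 8 = Prime u" "x ! 9 = Sym y"
  shows "x = estr cord u y"
  using assms(1)
proof (cases rule: batch_elem_cases)
  case (1 u')
  then show ?thesis using assms(3) sstr_nth[of 9 u'] by simp
next
  case (2 u' w')
  then show ?thesis using assms(2,3) estr_nth[of 8 cord u' w'] estr_nth[of 9 cord u' w'] by simp
qed

lemma Dollar_position:
  assumes "i < length xs" "xs ! i = sstr u" "t < length X" "X ! t = Dollar u"
  shows "t = 10 * i + 9"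
proof -
  obtain i' q where iq: "i' < length xs" "q < 10" "t = 10 * i' + q"
    using obtain_block_position[OF assms(3)] .
  have Dollar: "xs ! i' ! q = Dollar u" using assms(4) nth_X[OF iq(1,2)] iq(3) by simp
  from nth_mem[OF iq(1)] show ?thesis
  proof (cases rule: batch_elem_cases)
    case (1 u')
    then have "q = 9" "u' = u" using Dollar iq(2) sstr_nth[OF iq(2), of u'] by (auto split: if_splits)
    then have "i' = i" using batch_nth_inj[OF iq(1) assms(1)] 1 assms(2) by simp
    then show ?thesis using iq \<open>q = 9\<close> by simp
  next
    case (2 u' w')
    then show ?thesis using Dollar estr_nth[OF iq(2), of cord u' w'] by (auto split: if_splits)
  qed
qed

lemma lz_boundary_sstr_end:
  assumes "i < length xs" "xs ! i = sstr u"
  shows "lz_boundary X (10 * i + 10)"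
proof -
  have r: "10 * i + 9 < length X" using assms(1) length_X by simp
  have Dollar: "X ! (10 * i + 9) = Dollar u" using nth_X[OF assms(1), of 9] assms(2) sstr_nth[of 9 u] by simp
  have "X ! (10 * i + 9) \<notin> set (take (10 * i + 9) X)"
  proof
    assume "X ! (10 * i + 9) \<in> set (take (10 * i + 9) X)"
    then obtain t where "t < 10 * i + 9" "X ! t = Dollar u"
      using Dollar by (auto simp: in_set_conv_nth)
    then show False using Dollar_position[OF assms, of t] r by simp
  qed
  then show ?thesis using lz_boundary_Suc_fresh[OF r] by (simp add: add.commute)
qed

end

locale estr_block = batch +
  fixes k :: nat and v w
  assumes k_less: "k < length xs" and block: "xs ! k = estr cord v w" and edge: "(v, w) \<in> E"
begin

lemma block_end_le_length: "10 * k + 10 \<le> length X"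
  using k_less length_X by simp

lemma nth_X_estr:
  assumes "10 * k \<le> t" "t \<le> 10 * k + 8"
  shows "X ! t = (if even t then Prime v else Sym (cpred cord v w))"
proof -
  have "X ! t = estr cord v w ! (t - 10 * k)"
    using nth_X[OF k_less, of "t - 10 * k"] block assms by simp
  then show ?thesis using estr_nth[of "t - 10 * k" cord v w] assms by auto
qed

lemma nth_X_estr_last: "X ! (10 * k + 9) = Sym w"
  using nth_X[OF k_less, of 9] block estr_nth[of 9] by simp

lemma cpred_pattern_position:
  assumes "t + 2 < length X" "X ! t = Sym (cpred cord v w)" "X ! (t + 1) = Prime v"
    "X ! (t + 2) = Sym (cpred cord v w)"
  shows "10 * k \<le> t + 1 \<and> t + 1 \<le> 10 * k + 6 \<and> even (t + 1)"
proof -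
  obtain i q where iq: "i < length xs" "q < 10" "t + 1 = 10 * i + q"
    using obtain_block_position[of "t + 1"] assms(1) by auto
  have Prime: "xs ! i ! q = Prime v" using assms(3) nth_X[OF iq(1,2)] iq(3) by simp
  have succ: "X ! (t + 2) = xs ! i ! (q + 1)" if "q < 9"
    using nth_X[OF iq(1), of "q + 1"] iq(3) that by simp
  from nth_mem[OF iq(1)] show ?thesis
  proof (cases rule: batch_elem_cases)
    case (1 u)
    then have "q < 9" "xs ! i ! (q + 1) \<noteq> Sym (cpred cord v w)"
      using Prime iq(2) sstr_nth[OF iq(2), of u] sstr_nth[of "q + 1" u] by (auto split: if_splits)
    then show ?thesis using succ assms(4) by simp
  next
    case (2 u w')
    then have q: "even q" "u = v" using Prime estr_nth[OF iq(2), of cord u w'] by (auto split: if_splits)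
    then have "q \<le> 8" using iq(2) by presburger
    show ?thesis
    proof (cases "q = 8")
      case True
      have "t = 10 * i + 7" using iq(3) True by simp
      then have "X ! t = estr cord v w' ! 7" using nth_X[OF iq(1), of 7] 2 q by simp
      then have "cpred cord v w' = w'"
        using succ True assms(2,4) 2 q estr_nth[of 7 cord v w'] estr_nth[of 9 cord v w'] by simp
      then show ?thesis using cpred_neq 2 q by simp
    next
      case False
      then have "cpred cord v w' = cpred cord v w"
        using succ assms(4) 2 q \<open>q \<le> 8\<close> estr_nth[of "q + 1" cord v w'] by simp
      then have "w' = w" using cpred_inj 2 q edge by blast
      then have "i = k" using batch_nth_inj[OF iq(1) k_less] 2 q block by simp
      moreover have "q \<le> 6" using q(1) \<open>q \<le> 8\<close> \<open>q \<noteq> 8\<close> by presburger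
      ultimately show ?thesis using iq q by simp
    qed
  qed
qed

lemma not_prev_occ_tail:
  assumes "p \<le> 10 * k + 5" "10 * k + 10 \<le> p + m"
  shows "\<not> prev_occ X p m"
proof
  assume "prev_occ X p m"
  then obtain j where j: "j < p" "p + m \<le> length X" and copy: "\<forall>r<m. X ! (j + r) = X ! (p + r)"
    using assms unfolding prev_occ_nth_iff by auto
  define t where "t = j + (10 * k + 5 - p)"
  have copy_tail: "X ! (t + r) = X ! (10 * k + 5 + r)" if "r < 5" for r
    using copy[rule_format, of "10 * k + 5 - p + r"] that assms unfolding t_def
    by (simp add: add.assoc)
  have "10 * k \<le> t + 1 \<and> t + 1 \<le> 10 * k + 6 \<and> even (t + 1)"
  proof (rule cpred_pattern_position)
    show "t + 2 < length X" using j block_end_le_length assms unfolding t_def by linarith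
  qed (use copy_tail[of 0] copy_tail[of 1] copy_tail[of 2] nth_X_estr in \<open>simp_all add: add.assoc\<close>)
  moreover have "t < 10 * k + 5" using j assms unfolding t_def by linarith
  ultimately have "X ! (t + 4) = Sym (cpred cord v w)"
    using nth_X_estr[of "t + 4"] by auto
  moreover have "X ! (t + 4) = Sym w" using copy_tail[of 4] nth_X_estr_last by (simp add: add.commute)
  ultimately show False using cpred_neq[OF edge] by simp
qed

lemma copy_distance_two:
  assumes "j < p" "p \<le> 10 * k + 1" "10 * k + 4 \<le> p + m" "p + m \<le> length X"
    and copy: "\<forall>r<m. X ! (j + r) = X ! (p + r)"
  shows "j + 2 = p"
proof -
  define t where "t = j + (10 * k + 1 - p)"
  have copy_pattern: "X ! (t + r) = X ! (10 * k + 1 + r)" if "r < 3" for r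
    using copy[rule_format, of "10 * k + 1 - p + r"] that assms(2,3) unfolding t_def
    by (simp add: add.assoc)
  have "10 * k \<le> t + 1 \<and> t + 1 \<le> 10 * k + 6 \<and> even (t + 1)"
  proof (rule cpred_pattern_position)
    show "t + 2 < length X" using assms unfolding t_def by linarith
  qed (use copy_pattern[of 0] copy_pattern[of 1] copy_pattern[of 2] nth_X_estr
      in \<open>simp_all add: add.assoc\<close>)
  moreover have "t < 10 * k + 1" using assms(1,2) unfolding t_def by linarith
  ultimately have "t + 1 = 10 * k" by presburger
  then show ?thesis using assms(2) unfolding t_def by arith
qed

lemma prev_occ_by_period_two:
  assumes "2 \<le> p" "p \<le> 10 * k + 9" "10 * k + 2 \<le> p + m"
    and copy: "\<forall>r<m. X ! (p - 2 + r) = X ! (p + r)"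
  shows "prev_occ X p (10 * k + 9 - p)"
  unfolding prev_occ_nth_iff
proof (intro disjI2 exI[of _ "p - 2"] conjI allI impI)
  show "p - 2 < p" "p + (10 * k + 9 - p) \<le> length X" using assms block_end_le_length by auto
  fix r assume r: "r < 10 * k + 9 - p"
  show "X ! (p - 2 + r) = X ! (p + r)"
  proof (cases "r < m")
    case False
    then have "10 * k \<le> p - 2 + r" "p + r \<le> 10 * k + 8" using assms r by auto
    moreover have "even (p - 2 + r) \<longleftrightarrow> even (p + r)"
      using assms(1) by simp
    ultimately show ?thesis using nth_X_estr[of "p - 2 + r"] nth_X_estr[of "p + r"] by simp
  qed (use copy in simp)
qed

lemma phrase_ends_at_block_end:
  assumes "p \<le> 10 * k + 5" "prev_occ X p (10 * k + 9 - p)"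
  shows "p + lz_len X p = 10 * k + 10"
proof -
  have "10 * k + 10 - p - 1 = 10 * k + 9 - p" by arith
  then have "10 * k + 10 - p \<le> lz_len X p"
    using le_lz_lenI[of X p "10 * k + 10 - p"] assms block_end_le_length by simp
  moreover have "lz_len X p \<le> 10 * k + 10 - p"
    by (rule lz_len_leI) (use assms not_prev_occ_tail block_end_le_length in auto)
  ultimately show ?thesis using assms(1) by linarith
qed

lemma phrase_ends_at_block_end_inner:
  "10 * k + 2 \<le> p \<Longrightarrow> p \<le> 10 * k + 5 \<Longrightarrow> p + lz_len X p = 10 * k + 10"
  using phrase_ends_at_block_end prev_occ_by_period_two[of p 0] by simp

lemma lz_boundary_estr_end: "lz_boundary X (10 * k + 10)"
proof (rule lz_boundaryI_phrase_end)
  show "10 * k + 5 < length X" using block_end_le_length by simp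
  fix p assume p: "lz_boundary X p" "p \<le> 10 * k + 5" "10 * k + 5 < p + lz_len X p"
  show "p + lz_len X p = 10 * k + 10"
  proof (cases "10 * k + 2 \<le> p")
    case False
    let ?m = "lz_len X p - 1"
    have "p < length X" using p(2) block_end_le_length by simp
    then obtain j where j: "j < p" "p + ?m \<le> length X" and copy: "\<forall>r<?m. X ! (j + r) = X ! (p + r)"
      using lz_len_bounds(3)[of p X] p(3) False unfolding prev_occ_nth_iff by auto
    have "j + 2 = p" using copy_distance_two[OF j(1) _ _ j(2) copy] False p(3) by linarith
    then have "prev_occ X p (10 * k + 9 - p)"
      using prev_occ_by_period_two[of p ?m] p copy by auto
    then show ?thesis using phrase_ends_at_block_end p(2) by blast
  qed (use phrase_ends_at_block_end_inner p(2) in blast)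
qed

lemma nth_X_before_block:
  assumes "0 < k"
  shows "X ! (10 * k - 2) = xs ! (k - 1) ! 8" "X ! (10 * k - 1) = xs ! (k - 1) ! 9"
proof -
  have k: "k - 1 < length xs" using assms k_less by simp
  have "10 * k - 2 = 10 * (k - 1) + 8" "10 * k - 1 = 10 * (k - 1) + 9" using assms by auto
  moreover have "X ! (10 * (k - 1) + 8) = xs ! (k - 1) ! 8" "X ! (10 * (k - 1) + 9) = xs ! (k - 1) ! 9"
    using nth_X[OF k, of 8] nth_X[OF k, of 9] by simp_all
  ultimately show "X ! (10 * k - 2) = xs ! (k - 1) ! 8" "X ! (10 * k - 1) = xs ! (k - 1) ! 9"
    by metis+
qed

lemma prev_occ_block_start:
  assumes "prev_occ X (10 * k) m" "4 \<le> m"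
  shows "0 < k \<and> xs ! (k - 1) ! 8 = Prime v \<and> xs ! (k - 1) ! 9 = Sym (cpred cord v w)"
proof -
  obtain j where j: "j < 10 * k" "10 * k + m \<le> length X" and copy: "\<forall>r<m. X ! (j + r) = X ! (10 * k + r)"
    using assms unfolding prev_occ_nth_iff by auto
  have "j + 2 = 10 * k" using copy_distance_two[OF j(1) _ _ j(2) copy] assms(2) by simp
  then have k: "0 < k" "j = 10 * k - 2" "j + 1 = 10 * k - 1" by auto
  have "X ! j = Prime v" "X ! (j + 1) = Sym (cpred cord v w)"
    using copy[rule_format, of 0] copy[rule_format, of 1] assms(2) nth_X_estr by auto
  then show ?thesis using k nth_X_before_block by metis
qed

lemma lz_len_block_start_after_estr:
  assumes "0 < k" "xs ! (k - 1) = estr cord v (cpred cord v w)"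
  shows "lz_len X (10 * k) = 10"
proof -
  have "X ! (10 * k - 2 + r) = X ! (10 * k + r)" if "r < 2" for r
  proof -
    have "10 * k - 2 + 1 = 10 * k - 1" using assms(1) by simp
    then show ?thesis using that nth_X_before_block[OF assms(1)] assms(2) estr_nth[of 8] estr_nth[of 9]
        nth_X_estr[of "10 * k"] nth_X_estr[of "10 * k + 1"] by (auto simp: less_2_cases_iff)
  qed
  then have "prev_occ X (10 * k) (10 * k + 9 - 10 * k)"
    using assms(1) by (intro prev_occ_by_period_two) auto
  then show ?thesis using phrase_ends_at_block_end[of "10 * k"] by simp
qed

lemma lz_len_block_start_after_sstr:
  assumes "0 < k" "xs ! (k - 1) = sstr v"
  shows "2 \<le> lz_len X (10 * k)" "lz_len X (10 * k) \<le> 4"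
proof -
  have "X ! (10 * k - 2) = X ! (10 * k)"
    using nth_X_before_block(1)[OF assms(1)] assms(2) sstr_nth[of 8] nth_X_estr[of "10 * k"] by simp
  then have "prev_occ X (10 * k) 1"
    using assms(1) block_end_le_length unfolding prev_occ_nth_iff by (intro disjI2 exI[of _ "10 * k - 2"]) auto
  then show "2 \<le> lz_len X (10 * k)" using block_end_le_length by (intro le_lz_lenI) auto
  have "\<not> prev_occ X (10 * k) 4" using prev_occ_block_start[of 4] assms(2) sstr_nth[of 9 v] by auto
  then show "lz_len X (10 * k) \<le> 4" using block_end_le_length by (intro lz_len_leI) auto
qed

lemma preceded_by_estr_cpred:
  assumes "prev_occ X (10 * k) 9"
  shows "0 < k \<and> xs ! (k - 1) = estr cord v (cpred cord v w)"
  using prev_occ_block_start[OF assms] k_less batch_elem_eq_estr[of "xs ! (k - 1)"] by simp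

end

context batch
begin

lemma lz_boundary_block_start:
  assumes "i \<le> length xs"
  shows "lz_boundary X (10 * i)"
proof (cases i)
  case (Suc i')
  then have i': "i' < length xs" using assms by simp
  from nth_mem[OF i'] show ?thesis
  proof (cases rule: batch_elem_cases)
    case (1 u)
    then show ?thesis using lz_boundary_sstr_end[OF i'] Suc by (simp add: add.commute)
  next
    case (2 u w)
    then have "estr_block V E cord xs i' u w" using i' by unfold_locales
    then show ?thesis using estr_block.lz_boundary_estr_end Suc by (simp add: add.commute)
  qed
qed (simp add: lz_boundary.start)

end

theorem lemma7:
  fixes V :: "'v set" and E :: "('v \<times> 'v) set" and cord :: "'v \<Rightarrow> 'v list"
    and xs :: "'v sym list list" and k :: nat and v w :: 'v
  assumes "valid_graph V E cord"
    and "is_batch V E cord xs"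
    and "(v, w) \<in> E"
    and "k < length xs" and "xs ! k = estr cord v w"
  shows "let X = concat xs; a = length (concat (take k xs)); b = a + length (estr cord v w) in
     (0 < k \<and> xs ! (k - 1) = estr cord v (cpred cord v w) \<longrightarrow> union_of_phrases X a b 1) \<and>
     (0 < k \<and> xs ! (k - 1) = sstr v \<longrightarrow> union_of_phrases X a b 2) \<and>
     (\<not> (0 < k \<and> (xs ! (k - 1) = estr cord v (cpred cord v w) \<or> xs ! (k - 1) = sstr v)) \<longrightarrow>
        (\<exists>n\<ge>2. union_of_phrases X a b n))"
proof -
  interpret estr_block V E cord xs k v w
    using assms by unfold_locales
  let ?a = "10 * k"
  have a: "length (concat (take k xs)) = ?a"
    using length_concat_uniform[of "take k xs" 10] length_batch_elem assms(4)
    by (auto dest: in_set_takeD)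
  have start: "lz_boundary X ?a" "?a < length X"
    using lz_boundary_block_start k_less block_end_le_length by auto
  show ?thesis unfolding Let_def a length_estr
  proof (intro conjI impI)
    assume "0 < k \<and> xs ! (k - 1) = estr cord v (cpred cord v w)"
    then show "union_of_phrases X ?a (?a + 10) 1"
      using union_of_phrases_single[OF start] lz_len_block_start_after_estr by simp
  next
    assume "0 < k \<and> xs ! (k - 1) = sstr v"
    then show "union_of_phrases X ?a (?a + 10) 2"
      using union_of_phrases_two[OF start refl] lz_len_block_start_after_sstr
        phrase_ends_at_block_end_inner block_end_le_length by simp
  next
    assume "\<not> (0 < k \<and> (xs ! (k - 1) = estr cord v (cpred cord v w) \<or> xs ! (k - 1) = sstr v))"
    then have "lz_len X ?a \<le> 9" using preceded_by_estr_cpred start(2) lz_len_leI by blast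
    then show "\<exists>n\<ge>2. union_of_phrases X ?a (?a + 10) n"
      using union_of_phrases_ge2[OF start(1) lz_boundary_estr_end] by simp
  qed
qed

end
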